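(* Let $n\ge 1$ and let $R_n=\{s_1,\dots,s_n\}$, where $s_1=0$ and $s_i=1\,0^{i-2}\,1$ for $2\le i\le n$. Then for every code $C_n\in\mathbb{S}_n$, every codeword of $C_n$ has some codeword of $R_n$ as a prefix.
   Context: All strings are finite binary strings; $0^{r}$ denotes the string of $r$ zeros and $|w|$ the length of $w$. A palindrome is a string equal to its reversal. A symmetric fix-free code is a finite set of binary palindromes no one of which is a proper prefix of another. $\mathbb{S}_n$ denotes the set of symmetric fix-free codes with exactly $n$ codewords which do not contain the one-bit string $1$ and all of whose codewords have length at most $n$. "Prefix" includes the case of equality. *)

theory Defs
  imports Main "HOL-Library.Sublist"
begin

text \<open>Binary strings are lists of booleans: False = bit 0, True = bit 1.\<close>

definition palindrome :: "bool list \<Rightarrow> bool" where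
  "palindrome w \<longleftrightarrow> rev w = w"

definition proper_prefix :: "bool list \<Rightarrow> bool list \<Rightarrow> bool" where
  "proper_prefix u v \<longleftrightarrow> prefix u v \<and> u \<noteq> v"

definition symmetric_fix_free :: "bool list set \<Rightarrow> bool" where
  "symmetric_fix_free C \<longleftrightarrow> finite C \<and> (\<forall>w\<in>C. w \<noteq> [] \<and> palindrome w)
     \<and> (\<forall>u\<in>C. \<forall>v\<in>C. \<not> proper_prefix u v)"

definition S_codes :: "nat \<Rightarrow> bool list set set" where
  "S_codes n = {C. symmetric_fix_free C \<and> card C = n \<and> [True] \<notin> C
                   \<and> (\<forall>w\<in>C. length w \<le> n)}"

definition s_word :: "nat \<Rightarrow> bool list" where
  "s_word i = (if i = 1 then [False] else [True] @ replicate (i - 2) False @ [True])"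

definition R_code :: "nat \<Rightarrow> bool list set" where
  "R_code n = s_word ` {1..n}"

end

theory Submission
  imports Defs
begin

text \<open>Only three properties of a codeword matter: it is a nonempty palindrome other than
  the word 1. If it starts with 0 then s_1 is a prefix; if it starts with 1 then, being a
  palindrome of length at least 2, it also ends with 1, so its first 1 after the leading
  one exists and it begins with 1 0^k 1 = s_(k+2), where k + 2 does not exceed its length.\<close>

lemma replicate_False_prefix_first_True:
  assumes "True \<in> set t"
  obtains k rest where "t = replicate k False @ True # rest"
proof -
  obtain ys rest where t: "t = ys @ True # rest" and "True \<notin> set ys"
    using split_list_first[OF assms] by blast
  then have "ys = replicate (length ys) False"
    using replicate_length_same[of ys False] by (metis (full_types))
  with t show thesis
    using that by metis
qed

lemma palindrome_starting_True_has_True_later: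
  assumes "palindrome (True # t)" and "t \<noteq> []"
  shows "True \<in> set t"
proof -
  have "last (True # t) = True"
    using assms(1) by (metis hd_rev list.sel(1) palindrome_def)
  then have "last t = True"
    using assms(2) by simp
  then show ?thesis
    using assms(2) last_in_set by metis
qed

lemma palindrome_has_s_word_prefix:
  assumes "w \<noteq> []" and "palindrome w" and "w \<noteq> [True]"
  shows "\<exists>i\<in>{1..length w}. prefix (s_word i) w"
proof -
  obtain a t where w: "w = a # t"
    using assms(1) by (cases w) auto
  show ?thesis
  proof (cases a)
    case False
    then have "prefix (s_word 1) w"
      using w by (simp add: s_word_def)
    then show ?thesis
      using w by force
  next
    case True
    with w have w_True: "w = True # t" by simp
    with assms(3) have "t \<noteq> []" by auto
    with w_True assms(2) have "True \<in> set t"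
      using palindrome_starting_True_has_True_later by simp
    then obtain k rest where t: "t = replicate k False @ True # rest"
      by (rule replicate_False_prefix_first_True)
    have "prefix (s_word (k + 2)) w" and "k + 2 \<in> {1..length w}"
      using w_True t by (simp_all add: s_word_def)
    then show ?thesis by blast
  qed
qed

theorem lemma1:
  fixes n :: nat and C :: "bool list set"
  assumes "n \<ge> 1" and "C \<in> S_codes n"
  shows "\<forall>w\<in>C. \<exists>s\<in>R_code n. prefix s w"
proof
  fix w assume "w \<in> C"
  then have "w \<noteq> []" "palindrome w" "w \<noteq> [True]" "length w \<le> n"
    using assms(2) by (auto simp: S_codes_def symmetric_fix_free_def)
  then obtain i where "i \<in> {1..length w}" "prefix (s_word i) w"
    using palindrome_has_s_word_prefix by blast
  with \<open>length w \<le> n\<close> show "\<exists>s\<in>R_code n. prefix s w"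
    unfolding R_code_def by auto
qed

end
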